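(* Let $n,m\ge 1$ and let $\mathfrak{g}$ be of type $B_n$ ($\mathfrak{so}_{2n+1}$). The multiplicity of the trivial representation $V(0)$ in $V(\omega_n)^{\otimes 2m}$ (equivalently, the number of connected components of the crystal $B(\omega_n)^{\otimes 2m}$ isomorphic to $B(0)$) equals the determinant of the $n\times n$ Hankel matrix \[ \left[\operatorname{Cat}_{2n-i-j+m}\right]_{i,j=1}^{n}. \]
   Context: $V(\omega_n)$ is the spin representation of $\mathfrak{so}_{2n+1}$ (of dimension $2^n$), the irreducible representation whose highest weight is the fundamental weight $\omega_n=\tfrac12(\epsilon_1+\cdots+\epsilon_n)$. $\operatorname{Cat}_k=\frac{1}{k+1}\binom{2k}{k}$ is the $k$-th Catalan number. *)

theory Defs
  imports "Jordan_Normal_Form.Determinant"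
begin

definition catalan :: "nat \<Rightarrow> nat" where
  "catalan k = ((2 * k) choose k) div (k + 1)"

text \<open>Elements of B(omega_n) are sign vectors (s_1,...,s_n), encoded as boolean
 lists of length n (True = +, False = -); position k-1 holds s_k.
 The weight is (1/2)(s_1 eps_1 + ... + s_n eps_n).
 Simple roots: alpha_i = eps_i - eps_(i+1) for 1 <= i < n, alpha_n = eps_n.\<close>

definition spin_elems :: "nat \<Rightarrow> bool list set" where
  "spin_elems n = {s. length s = n}"

definition spin_f :: "nat \<Rightarrow> nat \<Rightarrow> bool list \<Rightarrow> bool list option" where
  "spin_f n i s =
     (if 1 \<le> i \<and> i < n then
        (if s ! (i - 1) \<and> \<not> s ! i then Some (s[i - 1 := False, i := True]) else None)
      else if i = n \<and> 1 \<le> n then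
        (if s ! (n - 1) then Some (s[n - 1 := False]) else None)
      else None)"

definition spin_e :: "nat \<Rightarrow> nat \<Rightarrow> bool list \<Rightarrow> bool list option" where
  "spin_e n i s =
     (if 1 \<le> i \<and> i < n then
        (if \<not> s ! (i - 1) \<and> s ! i then Some (s[i - 1 := True, i := False]) else None)
      else if i = n \<and> 1 \<le> n then
        (if \<not> s ! (n - 1) then Some (s[n - 1 := True]) else None)
      else None)"

text \<open>phi_i / epsilon_i of the (minuscule) spin crystal: lengths of i-strings.\<close>
definition spin_phi :: "nat \<Rightarrow> nat \<Rightarrow> bool list \<Rightarrow> nat" where
  "spin_phi n i s = (if spin_f n i s = None then 0 else 1)"

definition spin_eps :: "nat \<Rightarrow> nat \<Rightarrow> bool list \<Rightarrow> nat" where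
  "spin_eps n i s = (if spin_e n i s = None then 0 else 1)"

text \<open>Twice the weight, as a coordinate vector w.r.t. eps_1..eps_n (index k = eps_(k+1)).\<close>
definition spin_wt2 :: "bool list \<Rightarrow> nat \<Rightarrow> int" where
  "spin_wt2 s k = (if s ! k then 1 else -1)"

text \<open>A list [b_1,...,b_N] represents b_1 \<otimes> (b_2 \<otimes> (... \<otimes> b_N)); the empty list is
 the unique element of the trivial crystal B(0).  For b1 \<otimes> b2:
   f_i(b1 \<otimes> b2) = f_i b1 \<otimes> b2 if phi_i(b1) > eps_i(b2), else b1 \<otimes> f_i b2;
   e_i(b1 \<otimes> b2) = e_i b1 \<otimes> b2 if phi_i(b1) \<ge> eps_i(b2), else b1 \<otimes> e_i b2;
   phi_i(b1 \<otimes> b2) = phi_i(b2) + max(0, phi_i(b1) - eps_i(b2));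
   eps_i(b1 \<otimes> b2) = eps_i(b1) + max(0, eps_i(b2) - phi_i(b1)).\<close>

fun tens_phi :: "nat \<Rightarrow> nat \<Rightarrow> bool list list \<Rightarrow> nat"
and tens_eps :: "nat \<Rightarrow> nat \<Rightarrow> bool list list \<Rightarrow> nat" where
  "tens_phi n i [] = 0"
| "tens_phi n i (b # bs) = tens_phi n i bs + (spin_phi n i b - tens_eps n i bs)"
| "tens_eps n i [] = 0"
| "tens_eps n i (b # bs) = spin_eps n i b + (tens_eps n i bs - spin_phi n i b)"

fun tens_f :: "nat \<Rightarrow> nat \<Rightarrow> bool list list \<Rightarrow> bool list list option" where
  "tens_f n i [] = None"
| "tens_f n i (b # bs) =
     (if spin_phi n i b > tens_eps n i bs
      then map_option (\<lambda>c. c # bs) (spin_f n i b)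
      else map_option (\<lambda>cs. b # cs) (tens_f n i bs))"

fun tens_e :: "nat \<Rightarrow> nat \<Rightarrow> bool list list \<Rightarrow> bool list list option" where
  "tens_e n i [] = None"
| "tens_e n i (b # bs) =
     (if spin_phi n i b \<ge> tens_eps n i bs
      then map_option (\<lambda>c. c # bs) (spin_e n i b)
      else map_option (\<lambda>cs. b # cs) (tens_e n i bs))"

definition tens_wt2 :: "bool list list \<Rightarrow> nat \<Rightarrow> int" where
  "tens_wt2 bs k = (\<Sum>b\<leftarrow>bs. spin_wt2 b k)"

definition tensor_power :: "nat \<Rightarrow> nat \<Rightarrow> bool list list set" where
  "tensor_power n N = {bs. length bs = N \<and> (\<forall>b\<in>set bs. b \<in> spin_elems n)}"

text \<open>A connected component isomorphic to B(0) is a single vertex of weight 0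
 with no incident i-arrows for any colour i.\<close>
definition trivial_components :: "nat \<Rightarrow> nat \<Rightarrow> bool list list set" where
  "trivial_components n N =
     {bs \<in> tensor_power n N.
        (\<forall>k<n. tens_wt2 bs k = 0) \<and>
        (\<forall>i\<in>{1..n}. tens_e n i bs = None \<and> tens_f n i bs = None)}"

definition hankel_cat :: "nat \<Rightarrow> nat \<Rightarrow> int mat" where
  "hankel_cat n m = mat n n (\<lambda>(i, j). int (catalan (2 * n + m - (i + 1) - (j + 1))))"

end

theory Submission
  imports Defs "HOL-Library.Product_Lexorder"
begin

(* The trivial components of B(omega_n)^(2m) are the words all of whose e_i and f_i vanish.
   By the signature rule this means that every prefix of the word has dominant weight and the
   whole word has weight 0.  Following the i-th coordinate of twice the prefix weights, lifted
   to height 2(n-1-i), turns such a word into n non-negative +-1 walks of length 2m from the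
   levels 0, 2, ..., 2(n-1) back to themselves which never meet.  By Lindstroem-Gessel-Viennot
   their number is the determinant of the matrix counting non-negative walks between these
   levels, and since Cat_k counts non-negative walks of length 2k from 0 to 0, the Catalan
   Hankel matrix is that matrix multiplied by unitriangular matrices on both sides. *)

section \<open>Non-negative walks and the Catalan Hankel matrix\<close>

fun nonneg_walk_count :: "nat \<Rightarrow> int \<Rightarrow> int \<Rightarrow> nat" where
  "nonneg_walk_count 0 a b = (if a = b \<and> 0 \<le> a then 1 else 0)"
| "nonneg_walk_count (Suc t) a b =
     (if 0 \<le> a then nonneg_walk_count t (a + 1) b + nonneg_walk_count t (a - 1) b else 0)"

lemma nonneg_walk_count_nonzeroD:
  assumes "nonneg_walk_count t a b \<noteq> 0"
  shows "even (int t + a + b)" "\<bar>b - a\<bar> \<le> int t" "0 \<le> a" "0 \<le> b"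
proof -
  have "even (int t + a + b) \<and> \<bar>b - a\<bar> \<le> int t \<and> 0 \<le> a \<and> 0 \<le> b"
    using assms
  proof (induction t arbitrary: a)
    case (Suc t)
    from Suc.prems have a: "0 \<le> a" by (auto split: if_splits)
    with Suc.prems consider (up) "nonneg_walk_count t (a + 1) b \<noteq> 0"
      | (down) "nonneg_walk_count t (a - 1) b \<noteq> 0" by fastforce
    then show ?case
    proof cases
      case up
      then show ?thesis using Suc.IH[OF up] a by (simp add: algebra_simps) arith
    next
      case down
      then show ?thesis using Suc.IH[OF down] a by (simp add: algebra_simps) arith
    qed
  qed (auto split: if_splits)
  then show "even (int t + a + b)" "\<bar>b - a\<bar> \<le> int t" "0 \<le> a" "0 \<le> b" by auto
qed

lemma nonneg_walk_count_eq_0I: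
  assumes "odd (int t + a + b) \<or> int t < \<bar>b - a\<bar> \<or> a < 0"
  shows "nonneg_walk_count t a b = 0"
  using nonneg_walk_count_nonzeroD assms by (meson not_le)

lemma nonneg_walk_count_straight_up: "0 \<le> a \<Longrightarrow> nonneg_walk_count t a (a + int t) = 1"
proof (induction t arbitrary: a)
  case (Suc t)
  have "nonneg_walk_count t (a - 1) (a + int (Suc t)) = 0"
    by (rule nonneg_walk_count_eq_0I) simp
  moreover have "nonneg_walk_count t (a + 1) (a + int (Suc t)) = 1"
    using Suc.IH[of "a + 1"] Suc.prems by (simp add: algebra_simps)
  ultimately show ?case using Suc.prems by simp
qed simp

lemma nonneg_walk_count_straight_down: "0 \<le> b \<Longrightarrow> nonneg_walk_count t (b + int t) b = 1"
proof (induction t)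
  case (Suc t)
  have "nonneg_walk_count t (b + int (Suc t) + 1) b = 0"
    by (rule nonneg_walk_count_eq_0I) simp
  moreover have "nonneg_walk_count t (b + int (Suc t) - 1) b = 1"
    using Suc by (simp add: algebra_simps)
  ultimately show ?case using Suc.prems by simp
qed simp

text \<open>Chapman--Kolmogorov: split a walk after its first \<open>s\<close> steps; the bound \<open>M\<close> only has
  to dominate every height reachable in \<open>s\<close> steps.\<close>

lemma nonneg_walk_count_add:
  assumes "a + int s \<le> M"
  shows "nonneg_walk_count (s + t) a b =
    (\<Sum>c\<in>{0..M}. nonneg_walk_count s a c * nonneg_walk_count t c b)"
  using assms
proof (induction s arbitrary: a)
  case 0
  show ?case
  proof (cases "0 \<le> a")
    case True
    then show ?thesis using 0 by (simp add: if_distrib[of "\<lambda>x. x * _"] sum.delta cong: if_cong)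
  qed (simp add: nonneg_walk_count_eq_0I)
next
  case (Suc s)
  show ?case
  proof (cases "0 \<le> a")
    case True
    then have "nonneg_walk_count (Suc s + t) a b =
        nonneg_walk_count (s + t) (a + 1) b + nonneg_walk_count (s + t) (a - 1) b" by simp
    also have "\<dots> = (\<Sum>c\<in>{0..M}. nonneg_walk_count (Suc s) a c * nonneg_walk_count t c b)"
      using Suc.IH[of "a + 1"] Suc.IH[of "a - 1"] Suc.prems True
      by (simp add: sum.distrib[symmetric] add_mult_distrib)
    finally show ?thesis .
  qed simp
qed

fun free_walk_count :: "nat \<Rightarrow> int \<Rightarrow> nat" where
  "free_walk_count 0 d = (if d = 0 then 1 else 0)"
| "free_walk_count (Suc t) d = free_walk_count t (d - 1) + free_walk_count t (d + 1)"

lemma free_walk_count_eq_0: "int t < \<bar>d\<bar> \<Longrightarrow> free_walk_count t d = 0"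
  by (induction t arbitrary: d) auto

lemma free_walk_count_binomial: "free_walk_count t (2 * int k - int t) = t choose k"
proof (induction t arbitrary: k)
  case (Suc t)
  show ?case
  proof (cases k)
    case 0
    have "free_walk_count t (- int t - 2) = 0" by (rule free_walk_count_eq_0) simp
    then show ?thesis using Suc.IH[of 0] 0 by (simp add: algebra_simps)
  next
    case (Suc k')
    then show ?thesis using Suc.IH[of k'] Suc.IH[of k] by (simp add: algebra_simps)
  qed
qed simp

text \<open>Reflection principle: a free walk from \<open>a\<close> to \<open>b\<close> that touches \<open>-1\<close> corresponds to a
  free walk from \<open>-a - 2\<close> to \<open>b\<close>.\<close>

lemma nonneg_walk_count_reflection:
  assumes "-1 \<le> a" "0 \<le> b"
  shows "int (nonneg_walk_count t a b) =
    int (free_walk_count t (b - a)) - int (free_walk_count t (b + a + 2))"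
  using assms
proof (induction t arbitrary: a)
  case (Suc t)
  show ?case
  proof (cases "a = -1")
    case False
    with Suc.prems have "0 \<le> a" by simp
    then show ?thesis using Suc.IH[of "a + 1"] Suc.IH[of "a - 1"] Suc.prems
      by (simp add: algebra_simps)
  qed simp
qed auto

lemma catalan_eq_binomial_diff:
  "int (catalan k) = int ((2 * k) choose k) - int ((2 * k) choose Suc k)"
proof -
  define c d where "c = int ((2 * k) choose k)" and "d = int ((2 * k) choose Suc k)"
  have "k * ((2 * k) choose k) = Suc k * ((2 * k) choose Suc k)"
    using binomial_absorb_comp[of "2 * k" k] binomial_absorption[of k "2 * k"] by simp
  then have "int k * c = (int k + 1) * d"
    unfolding c_def d_def by (metis add.commute of_nat_Suc of_nat_mult)
  then have c: "c = (int k + 1) * (c - d)" by (simp add: algebra_simps)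
  have "int k + 1 \<noteq> 0" by simp
  then have "c div (int k + 1) = c - d" by (metis c nonzero_mult_div_cancel_left)
  then show ?thesis unfolding catalan_def c_def d_def by (simp add: zdiv_int add.commute)
qed

lemma nonneg_walk_count_catalan: "nonneg_walk_count (2 * k) 0 0 = catalan k"
proof -
  have "int (nonneg_walk_count (2 * k) 0 0) =
      int (free_walk_count (2 * k) (2 * int k - int (2 * k))) -
      int (free_walk_count (2 * k) (2 * int (Suc k) - int (2 * k)))"
    using nonneg_walk_count_reflection[of 0 0 "2 * k"] by simp
  also have "\<dots> = int (catalan k)"
    unfolding free_walk_count_binomial catalan_eq_binomial_diff ..
  finally show ?thesis by simp
qed

text \<open>The even heights \<open>2 (n - 1), \<dots>, 2, 0\<close> are listed downwards, matching the reversed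
  indices in the Hankel entry \<open>Cat (m + (n - 1 - i) + (n - 1 - j))\<close>.\<close>

definition level :: "nat \<Rightarrow> nat \<Rightarrow> int" where
  "level n k = 2 * int (n - 1 - k)"

lemma inj_on_level: "inj_on (level n) {..<n}"
  by (auto simp: inj_on_def level_def)

lemma level_image:
  assumes "1 \<le> n"
  shows "level n ` {..<n} = {c. even c \<and> 0 \<le> c \<and> c \<le> 2 * int (n - 1)}"
proof (intro equalityI subsetI)
  fix c assume "c \<in> {c. even c \<and> 0 \<le> c \<and> c \<le> 2 * int (n - 1)}"
  then obtain j where "c = 2 * int j" "j \<le> n - 1" by (auto elim!: evenE) (metis nonneg_int_cases)
  then have "c = level n (n - 1 - j)" "n - 1 - j < n" using assms by (auto simp: level_def)
  then show "c \<in> level n ` {..<n}" by blast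
qed (auto simp: level_def)

lemma sum_over_levels:
  fixes f :: "int \<Rightarrow> 'a::comm_monoid_add"
  assumes "1 \<le> n" "2 * int (n - 1) \<le> M"
    and "\<And>c. 0 \<le> c \<Longrightarrow> f c \<noteq> 0 \<Longrightarrow> even c \<and> c \<le> 2 * int (n - 1)"
  shows "sum f {0..M} = (\<Sum>k<n. f (level n k))"
proof -
  have "sum f {0..M} = sum f (level n ` {..<n})"
    by (rule sum.mono_neutral_right) (use assms in \<open>auto simp: level_image\<close>)
  then show ?thesis by (simp add: sum.reindex[OF inj_on_level])
qed

lemma nonneg_walk_count_split_first:
  assumes "1 \<le> n" "p < n"
  shows "int (nonneg_walk_count (2 * p + t) 0 b) =
    (\<Sum>k<n. int (nonneg_walk_count (2 * p) 0 (level n k)) * int (nonneg_walk_count t (level n k) b))"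
proof -
  have "nonneg_walk_count (2 * p + t) 0 b =
      (\<Sum>c\<in>{0..2 * int (n - 1)}. nonneg_walk_count (2 * p) 0 c * nonneg_walk_count t c b)"
    by (rule nonneg_walk_count_add) (use assms in simp)
  also have "\<dots> = (\<Sum>k<n. nonneg_walk_count (2 * p) 0 (level n k) * nonneg_walk_count t (level n k) b)"
  proof (rule sum_over_levels)
    fix c assume "nonneg_walk_count (2 * p) 0 c * nonneg_walk_count t c b \<noteq> 0"
    then have "nonneg_walk_count (2 * p) 0 c \<noteq> 0" by simp
    from nonneg_walk_count_nonzeroD[OF this] show "even c \<and> c \<le> 2 * int (n - 1)"
      using assms by auto
  qed (use assms in auto)
  finally show ?thesis by simp
qed

lemma nonneg_walk_count_split_last:
  assumes "1 \<le> n" "q < n"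
  shows "int (nonneg_walk_count (t + 2 * q) a 0) =
    (\<Sum>l<n. int (nonneg_walk_count t a (level n l)) * int (nonneg_walk_count (2 * q) (level n l) 0))"
proof -
  have "nonneg_walk_count (t + 2 * q) a 0 =
      (\<Sum>c\<in>{0..\<bar>a\<bar> + int t + 2 * int (n - 1)}. nonneg_walk_count t a c * nonneg_walk_count (2 * q) c 0)"
    by (rule nonneg_walk_count_add) simp
  also have "\<dots> = (\<Sum>l<n. nonneg_walk_count t a (level n l) * nonneg_walk_count (2 * q) (level n l) 0)"
  proof (rule sum_over_levels)
    fix c assume "nonneg_walk_count t a c * nonneg_walk_count (2 * q) c 0 \<noteq> 0"
    then have "nonneg_walk_count (2 * q) c 0 \<noteq> 0" by simp
    from nonneg_walk_count_nonzeroD[OF this] show "even c \<and> c \<le> 2 * int (n - 1)"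
      using assms by auto
  qed (use assms in auto)
  finally show ?thesis by simp
qed

definition walk_count_mat :: "nat \<Rightarrow> nat \<Rightarrow> int mat" where
  "walk_count_mat n N = mat n n (\<lambda>(k, l). int (nonneg_walk_count N (level n k) (level n l)))"

definition ascent_mat :: "nat \<Rightarrow> int mat" where
  "ascent_mat n = mat n n (\<lambda>(i, k). int (nonneg_walk_count (2 * (n - 1 - i)) 0 (level n k)))"

definition descent_mat :: "nat \<Rightarrow> int mat" where
  "descent_mat n = mat n n (\<lambda>(l, j). int (nonneg_walk_count (2 * (n - 1 - j)) (level n l) 0))"

lemma hankel_cat_factorization:
  assumes "1 \<le> n"
  shows "hankel_cat n m = ascent_mat n * (walk_count_mat n (2 * m) * descent_mat n)"
proof (rule eq_matI)
  fix i j
  assume "i < dim_row (ascent_mat n * (walk_count_mat n (2 * m) * descent_mat n))"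
    and "j < dim_col (ascent_mat n * (walk_count_mat n (2 * m) * descent_mat n))"
  then have ij: "i < n" "j < n" by (simp_all add: ascent_mat_def descent_mat_def)
  define p q where "p = n - 1 - i" and "q = n - 1 - j"
  have pq: "p < n" "q < n" using assms unfolding p_def q_def by auto
  have "2 * (2 * n + m - (i + 1) - (j + 1)) = 2 * p + (2 * m + 2 * q)"
    using ij unfolding p_def q_def by simp
  then have "hankel_cat n m $$ (i, j) = int (nonneg_walk_count (2 * p + (2 * m + 2 * q)) 0 0)"
    using ij by (simp add: hankel_cat_def nonneg_walk_count_catalan[symmetric])
  also have "\<dots> = (\<Sum>k<n. int (nonneg_walk_count (2 * p) 0 (level n k)) *
      (\<Sum>l<n. int (nonneg_walk_count (2 * m) (level n k) (level n l)) *
        int (nonneg_walk_count (2 * q) (level n l) 0)))"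
    by (simp add: nonneg_walk_count_split_first[OF assms pq(1)] nonneg_walk_count_split_last[OF assms pq(2)])
  also have "\<dots> = (ascent_mat n * (walk_count_mat n (2 * m) * descent_mat n)) $$ (i, j)"
    using ij unfolding p_def q_def
    by (simp add: ascent_mat_def walk_count_mat_def descent_mat_def scalar_prod_def lessThan_atLeast0)
  finally show "hankel_cat n m $$ (i, j) = \<dots>" .
qed (simp_all add: hankel_cat_def ascent_mat_def descent_mat_def)

lemma det_ascent_mat: "det (ascent_mat n) = 1"
proof -
  have diag: "ascent_mat n $$ (i, i) = 1" if "i < n" for i
    using that nonneg_walk_count_straight_up[of 0 "2 * (n - 1 - i)"]
    by (simp add: ascent_mat_def level_def)
  have "det (ascent_mat n) = prod_list (diag_mat (ascent_mat n))"
  proof (rule det_upper_triangular[of _ n])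
    show "upper_triangular (ascent_mat n)"
      by (rule upper_triangularI) (auto simp: ascent_mat_def level_def intro!: nonneg_walk_count_eq_0I)
  qed (simp add: ascent_mat_def)
  also have "\<dots> = 1"
    unfolding prod_list_diag_prod by (intro prod.neutral ballI diag) (simp add: ascent_mat_def)
  finally show ?thesis .
qed

lemma det_descent_mat: "det (descent_mat n) = 1"
proof -
  have diag: "descent_mat n $$ (i, i) = 1" if "i < n" for i
    using that nonneg_walk_count_straight_down[of 0 "2 * (n - 1 - i)"]
    by (simp add: descent_mat_def level_def)
  have "det (descent_mat n) = prod_list (diag_mat (descent_mat n))"
    by (rule det_lower_triangular[of n])
      (auto simp: descent_mat_def level_def intro!: nonneg_walk_count_eq_0I)
  also have "\<dots> = 1"
    unfolding prod_list_diag_prod by (intro prod.neutral ballI diag) (simp add: descent_mat_def)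
  finally show ?thesis .
qed

lemma det_hankel_cat:
  assumes "1 \<le> n"
  shows "det (hankel_cat n m) = det (walk_count_mat n (2 * m))"
proof -
  have "ascent_mat n \<in> carrier_mat n n" "walk_count_mat n (2 * m) \<in> carrier_mat n n"
    "descent_mat n \<in> carrier_mat n n"
    by (simp_all add: ascent_mat_def walk_count_mat_def descent_mat_def)
  then show ?thesis
    by (simp add: hankel_cat_factorization[OF assms] det_mult[of _ n] det_ascent_mat det_descent_mat)
qed

section \<open>The signature rule for tensor powers of the spin crystal\<close>

definition spin_pairing :: "nat \<Rightarrow> nat \<Rightarrow> bool list \<Rightarrow> int" where
  "spin_pairing n i b = int (spin_phi n i b) - int (spin_eps n i b)"

lemma spin_eps_le_1: "spin_eps n i b \<le> 1"
  by (simp add: spin_eps_def)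

lemma spin_phi_eq_0_if_eps: "spin_eps n i b \<noteq> 0 \<Longrightarrow> spin_phi n i b = 0"
  by (auto simp: spin_eps_def spin_phi_def spin_e_def spin_f_def split: if_splits)

lemma tens_e_eq_None_iff: "tens_e n i bs = None \<longleftrightarrow> tens_eps n i bs = 0"
  by (induction bs) (auto simp: spin_eps_def)

lemma tens_f_eq_None_iff: "tens_f n i bs = None \<longleftrightarrow> tens_phi n i bs = 0"
  by (induction bs) (auto simp: spin_phi_def)

lemma tens_phi_minus_eps:
  "int (tens_phi n i bs) - int (tens_eps n i bs) = (\<Sum>b\<leftarrow>bs. spin_pairing n i b)"
  by (induction bs) (auto simp: spin_pairing_def split: nat_diff_split)

definition prefix_pairing :: "nat \<Rightarrow> nat \<Rightarrow> bool list list \<Rightarrow> nat \<Rightarrow> int" where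
  "prefix_pairing n i bs t = (\<Sum>b\<leftarrow>take t bs. spin_pairing n i b)"

lemma all_prefix_pairing_Cons:
  "(\<forall>t\<le>length (b # bs). P (prefix_pairing n i (b # bs) t)) \<longleftrightarrow>
    P 0 \<and> (\<forall>t\<le>length bs. P (spin_pairing n i b + prefix_pairing n i bs t))"
  unfolding less_Suc_eq_le[symmetric] length_Cons All_less_Suc2 by (simp add: prefix_pairing_def)

text \<open>The signature rule, in the form valid for a minuscule crystal, where every letter has
  \<open>\<epsilon>\<^sub>i \<le> 1\<close> and \<open>\<phi>\<^sub>i = 0\<close> whenever \<open>\<epsilon>\<^sub>i \<noteq> 0\<close>.\<close>

lemma tens_eps_le_iff:
  assumes "0 \<le> c"
  shows "int (tens_eps n i bs) \<le> c \<longleftrightarrow> (\<forall>t\<le>length bs. 0 \<le> c + prefix_pairing n i bs t)"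
  using assms
proof (induction bs arbitrary: c)
  case Nil
  then show ?case by (simp add: prefix_pairing_def)
next
  case (Cons b bs)
  have eps: "spin_eps n i b \<le> 1" "spin_eps n i b \<noteq> 0 \<Longrightarrow> spin_phi n i b = 0"
    by (rule spin_eps_le_1, rule spin_phi_eq_0_if_eps)
  note prefixes = all_prefix_pairing_Cons[where P = "\<lambda>x. 0 \<le> c + x"]
  show ?case
  proof (cases "0 \<le> c + spin_pairing n i b")
    case True
    have "int (tens_eps n i (b # bs)) \<le> c \<longleftrightarrow> int (tens_eps n i bs) \<le> c + spin_pairing n i b"
      using eps True Cons.prems
      by (cases "spin_eps n i b = 0") (auto simp: spin_pairing_def split: nat_diff_split)
    then show ?thesis using Cons.IH[OF True] Cons.prems unfolding prefixes by (simp add: add.assoc)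
  next
    case False
    then have "\<not> int (tens_eps n i (b # bs)) \<le> c"
      using eps by (auto simp: spin_pairing_def)
    moreover have "\<not> (\<forall>t\<le>length bs. 0 \<le> c + (spin_pairing n i b + prefix_pairing n i bs t))"
      using False by (auto dest: spec[of _ 0] simp: prefix_pairing_def)
    ultimately show ?thesis unfolding prefixes by simp
  qed
qed

lemma tens_eps_eq_0_iff: "tens_eps n i bs = 0 \<longleftrightarrow> (\<forall>t\<le>length bs. 0 \<le> prefix_pairing n i bs t)"
  using tens_eps_le_iff[of 0 n i bs] by simp

definition prefix_wt2 :: "bool list list \<Rightarrow> nat \<Rightarrow> nat \<Rightarrow> int" where
  "prefix_wt2 bs t = tens_wt2 (take t bs)"

lemma spin_pairing_eq_wt2_diff:
  "1 \<le> i \<Longrightarrow> i < n \<Longrightarrow> 2 * spin_pairing n i b = spin_wt2 b (i - 1) - spin_wt2 b i"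
  by (cases "b ! (i - 1)"; cases "b ! i")
    (simp_all add: spin_pairing_def spin_eps_def spin_phi_def spin_e_def spin_f_def spin_wt2_def)

lemma spin_pairing_last: "1 \<le> n \<Longrightarrow> spin_pairing n n b = spin_wt2 b (n - 1)"
  by (cases "b ! (n - 1)")
    (simp_all add: spin_pairing_def spin_eps_def spin_phi_def spin_e_def spin_f_def spin_wt2_def)

lemma prefix_pairing_eq_wt2_diff:
  "1 \<le> i \<Longrightarrow> i < n \<Longrightarrow> 2 * prefix_pairing n i bs t = prefix_wt2 bs t (i - 1) - prefix_wt2 bs t i"
  by (simp add: prefix_pairing_def prefix_wt2_def tens_wt2_def spin_pairing_eq_wt2_diff
      sum_list_subtractf flip: sum_list_const_mult)

lemma prefix_pairing_last: "1 \<le> n \<Longrightarrow> prefix_pairing n n bs t = prefix_wt2 bs t (n - 1)"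
  by (simp add: prefix_pairing_def prefix_wt2_def tens_wt2_def spin_pairing_last)

definition dominant_B :: "nat \<Rightarrow> (nat \<Rightarrow> int) \<Rightarrow> bool" where
  "dominant_B n x \<longleftrightarrow> (\<forall>i. 1 \<le> i \<and> i < n \<longrightarrow> x i \<le> x (i - 1)) \<and> 0 \<le> x (n - 1)"

lemma tens_eps_eq_0_iff_dominant_prefixes:
  assumes "1 \<le> n"
  shows "(\<forall>i\<in>{1..n}. tens_eps n i bs = 0) \<longleftrightarrow> (\<forall>t\<le>length bs. dominant_B n (prefix_wt2 bs t))"
proof -
  have "0 \<le> prefix_pairing n i bs t \<longleftrightarrow> prefix_wt2 bs t i \<le> prefix_wt2 bs t (i - 1)"
    if "1 \<le> i" "i < n" for i t
    using prefix_pairing_eq_wt2_diff[OF that, of bs t] by linarith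
  moreover have "(\<forall>i\<in>{1..n}. P i) \<longleftrightarrow> (\<forall>i. 1 \<le> i \<and> i < n \<longrightarrow> P i) \<and> P n" for P
    using assms by (auto simp: le_less)
  ultimately show ?thesis
    using assms by (auto simp: tens_eps_eq_0_iff dominant_B_def prefix_pairing_last)
qed

definition zero_weight_lattice_words :: "nat \<Rightarrow> nat \<Rightarrow> bool list list set" where
  "zero_weight_lattice_words n N =
     {bs \<in> tensor_power n N. (\<forall>k<n. tens_wt2 bs k = 0) \<and> (\<forall>t\<le>N. dominant_B n (prefix_wt2 bs t))}"

text \<open>A word with all \<open>\<epsilon>\<^sub>i = 0\<close> is a highest weight element; if its weight is also \<open>0\<close>, then
  \<open>\<phi>\<^sub>i = \<epsilon>\<^sub>i + \<langle>h\<^sub>i, wt\<rangle> = 0\<close> as well.\<close>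

lemma trivial_components_eq_zero_weight_lattice_words:
  assumes "1 \<le> n"
  shows "trivial_components n N = zero_weight_lattice_words n N"
proof (intro equalityI subsetI)
  fix bs assume bs: "bs \<in> trivial_components n N"
  then have "length bs = N" by (simp add: trivial_components_def tensor_power_def)
  with bs show "bs \<in> zero_weight_lattice_words n N"
    using tens_eps_eq_0_iff_dominant_prefixes[OF assms, of bs]
    by (auto simp: trivial_components_def zero_weight_lattice_words_def tens_e_eq_None_iff)
next
  fix bs assume bs: "bs \<in> zero_weight_lattice_words n N"
  then have len: "length bs = N" and wt: "\<forall>k<n. prefix_wt2 bs N k = 0"
    by (auto simp: zero_weight_lattice_words_def tensor_power_def prefix_wt2_def)
  have eps: "\<forall>i\<in>{1..n}. tens_eps n i bs = 0"
    using bs len tens_eps_eq_0_iff_dominant_prefixes[OF assms, of bs]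
    by (simp add: zero_weight_lattice_words_def)
  have "prefix_pairing n i bs N = 0" if "i \<in> {1..n}" for i
    using that wt prefix_pairing_eq_wt2_diff[of i n bs N] prefix_pairing_last[OF assms, of bs N]
    by (cases "i = n") auto
  then have "tens_phi n i bs = 0" if "i \<in> {1..n}" for i
    using that eps len tens_phi_minus_eps[of n i bs] by (simp add: prefix_pairing_def)
  with bs eps show "bs \<in> trivial_components n N"
    by (simp add: trivial_components_def zero_weight_lattice_words_def
        tens_e_eq_None_iff tens_f_eq_None_iff)
qed

section \<open>Lindstroem-Gessel-Viennot for non-negative walks\<close>

definition nonneg_walks :: "nat \<Rightarrow> int \<Rightarrow> int \<Rightarrow> int list set" where
  "nonneg_walks N a b = {w. length w = Suc N \<and> w ! 0 = a \<and> w ! N = b \<and>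
     (\<forall>t\<le>N. 0 \<le> w ! t) \<and> (\<forall>t<N. \<bar>w ! Suc t - w ! t\<bar> = 1)}"

lemma Cons_in_nonneg_walks_Suc:
  "x # w \<in> nonneg_walks (Suc N) a b \<longleftrightarrow>
    x = a \<and> 0 \<le> a \<and> \<bar>w ! 0 - a\<bar> = 1 \<and> w \<in> nonneg_walks N (w ! 0) b"
  unfolding nonneg_walks_def less_Suc_eq_le[symmetric] All_less_Suc2 by auto

lemma nonneg_walks_Suc:
  assumes "0 \<le> a"
  shows "nonneg_walks (Suc N) a b = Cons a ` (nonneg_walks N (a + 1) b \<union> nonneg_walks N (a - 1) b)"
proof (intro equalityI subsetI)
  fix v assume v: "v \<in> nonneg_walks (Suc N) a b"
  then obtain x w where "v = x # w" by (cases v) (auto simp: nonneg_walks_def)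
  with v have "v = a # w" "\<bar>w ! 0 - a\<bar> = 1" "w \<in> nonneg_walks N (w ! 0) b"
    by (simp_all add: Cons_in_nonneg_walks_Suc)
  moreover from this have "w ! 0 = a + 1 \<or> w ! 0 = a - 1" by linarith
  ultimately show "v \<in> Cons a ` (nonneg_walks N (a + 1) b \<union> nonneg_walks N (a - 1) b)" by auto
next
  fix v assume "v \<in> Cons a ` (nonneg_walks N (a + 1) b \<union> nonneg_walks N (a - 1) b)"
  then show "v \<in> nonneg_walks (Suc N) a b"
    using assms by (auto simp: Cons_in_nonneg_walks_Suc) (auto simp: nonneg_walks_def)
qed

lemma finite_nonneg_walks: "finite (nonneg_walks N a b)"
  and card_nonneg_walks: "card (nonneg_walks N a b) = nonneg_walk_count N a b"
proof -
  have "finite (nonneg_walks N a b) \<and> card (nonneg_walks N a b) = nonneg_walk_count N a b"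
  proof (induction N arbitrary: a)
    case 0
    have "nonneg_walks 0 a b = (if a = b \<and> 0 \<le> a then {[a]} else {})"
      by (auto simp: nonneg_walks_def length_Suc_conv)
    then show ?case by simp
  next
    case (Suc N)
    show ?case
    proof (cases "0 \<le> a")
      case True
      have "nonneg_walks N (a + 1) b \<inter> nonneg_walks N (a - 1) b = {}"
        by (auto simp: nonneg_walks_def)
      then show ?thesis
        using Suc.IH[of "a + 1"] Suc.IH[of "a - 1"] True
        by (simp add: nonneg_walks_Suc card_image card_Un_disjoint)
    next
      case False
      then have "nonneg_walks (Suc N) a b = {}" by (auto simp: nonneg_walks_def)
      then show ?thesis using False by simp
    qed
  qed
  then show "finite (nonneg_walks N a b)" "card (nonneg_walks N a b) = nonneg_walk_count N a b"
    by auto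
qed

lemma nonneg_walks_splice:
  assumes w: "w \<in> nonneg_walks N a b" and w': "w' \<in> nonneg_walks N a' b'"
    and "t < N" and meet: "w ! t = w' ! t"
  shows "take (Suc t) w @ drop (Suc t) w' \<in> nonneg_walks N a b'"
proof -
  let ?v = "take (Suc t) w @ drop (Suc t) w'"
  have len: "length w = Suc N" "length w' = Suc N" using w w' by (simp_all add: nonneg_walks_def)
  have nth: "?v ! s = (if s \<le> t then w ! s else w' ! s)" if "s \<le> N" for s
    using len \<open>t < N\<close> that by (simp add: nth_append min_def)
  have "\<bar>?v ! Suc s - ?v ! s\<bar> = 1" if "s < N" for s
    using that w w' meet nth[of s] nth[of "Suc s"] unfolding nonneg_walks_def
    by (cases "s < t"; cases "s = t") auto
  then show ?thesis
    using w w' len \<open>t < N\<close> nth unfolding nonneg_walks_def by auto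
qed

lemma nonneg_walks_parity:
  assumes "w \<in> nonneg_walks N a b" "t \<le> N"
  shows "even (w ! t - a - int t)"
  using assms(2)
proof (induction t)
  case (Suc t)
  have "\<bar>w ! Suc t - w ! t\<bar> = 1" using assms(1) Suc.prems by (simp add: nonneg_walks_def)
  then have "w ! Suc t = w ! t + 1 \<or> w ! Suc t = w ! t - 1" by linarith
  with Suc.IH Suc.prems show ?case by auto
qed (use assms(1) in \<open>simp add: nonneg_walks_def\<close>)

text \<open>Walks of the same parity can only cross by meeting, so if they never meet, the gap between
  them stays at least \<open>2\<close>.\<close>

lemma noncolliding_walks_gap:
  assumes w: "w \<in> nonneg_walks N a b" and w': "w' \<in> nonneg_walks N a' b'"
    and "even (a - a')" "a' < a" and apart: "\<forall>s\<le>N. w ! s \<noteq> w' ! s" and "t \<le> N"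
  shows "w' ! t + 2 \<le> w ! t"
  using \<open>t \<le> N\<close>
proof (induction t)
  case 0
  have "w ! 0 = a" "w' ! 0 = a'" using w w' by (simp_all add: nonneg_walks_def)
  then show ?case using \<open>even (a - a')\<close> \<open>a' < a\<close> by presburger
next
  case (Suc t)
  have "even (w ! Suc t - w' ! Suc t)"
    using nonneg_walks_parity[OF w Suc.prems] nonneg_walks_parity[OF w' Suc.prems] \<open>even (a - a')\<close>
    by presburger
  moreover have "w ! Suc t \<noteq> w' ! Suc t" using apart Suc.prems by simp
  moreover have "\<bar>w ! Suc t - w ! t\<bar> = 1" "\<bar>w' ! Suc t - w' ! t\<bar> = 1"
    using w w' Suc.prems by (auto simp: nonneg_walks_def)
  ultimately show ?case using Suc by presburger
qed

definition collisions :: "nat \<Rightarrow> nat \<Rightarrow> (nat \<Rightarrow> 'a list) \<Rightarrow> (nat \<times> nat \<times> nat) set" where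
  "collisions n N W = {(t, i, j). t \<le> N \<and> i < j \<and> j < n \<and> W i ! t = W j ! t}"

text \<open>Triples are ordered lexicographically (by \<open>Product_Lexorder\<close>): the earliest
  collision time first, then the smallest pair of walks meeting at that time.\<close>

definition first_collision :: "nat \<Rightarrow> nat \<Rightarrow> (nat \<Rightarrow> 'a list) \<Rightarrow> nat \<times> nat \<times> nat" where
  "first_collision n N W = (LEAST x. x \<in> collisions n N W)"

lemma first_collision_in_collisions:
  "collisions n N W \<noteq> {} \<Longrightarrow> first_collision n N W \<in> collisions n N W"
  unfolding first_collision_def by (rule LeastI_ex) blast

lemma first_collision_cong:
  assumes "collisions n N W \<noteq> {}" and first: "first_collision n N W = (t, i, j)"
    and agree: "\<And>k s. s \<le> t \<Longrightarrow> W' k ! s = W k ! s"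
  shows "first_collision n N W' = (t, i, j)"
proof -
  have same: "(s, c) \<in> collisions n N W' \<longleftrightarrow> (s, c) \<in> collisions n N W" if "s \<le> t" for s c
    using agree[OF that] by (auto simp: collisions_def)
  have "(t, i, j) \<in> collisions n N W"
    using first_collision_in_collisions[OF assms(1)] first by simp
  then show ?thesis unfolding first_collision_def
  proof (intro Least_equality)
    show "(t, i, j) \<in> collisions n N W'" using same \<open>(t, i, j) \<in> collisions n N W\<close> by simp
  next
    fix y assume y: "y \<in> collisions n N W'"
    obtain s c where y_eq: "y = (s, c)" by (cases y)
    show "(t, i, j) \<le> y"
    proof (cases "s \<le> t")
      case True
      with y y_eq same have "y \<in> collisions n N W" by simp
      then show ?thesis using first unfolding first_collision_def by (metis Least_le)
    qed (simp add: y_eq)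
  qed
qed

definition swap_tails :: "nat \<Rightarrow> nat \<Rightarrow> nat \<Rightarrow> (nat \<Rightarrow> 'a list) \<Rightarrow> nat \<Rightarrow> 'a list" where
  "swap_tails t i j W = W(i := take (Suc t) (W i) @ drop (Suc t) (W j),
                          j := take (Suc t) (W j) @ drop (Suc t) (W i))"

lemma swap_tails_nth_le:
  assumes "s \<le> t" "t < length (W i)" "t < length (W j)"
  shows "swap_tails t i j W k ! s = W k ! s"
  using assms by (simp add: swap_tails_def nth_append)

lemma swap_tails_swap_tails:
  assumes "length (W i) = length (W j)" "t < length (W i)"
  shows "swap_tails t i j (swap_tails t i j W) = W"
  using assms by (auto simp: swap_tails_def fun_eq_iff min_def)

lemma swap_tails_in_PiE_nonneg_walks:
  assumes W: "W \<in> PiE {0..<n} (\<lambda>k. nonneg_walks N (a k) (b k))"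
    and "i < n" "j < n" "t < N" "W i ! t = W j ! t"
  shows "swap_tails t i j W \<in> PiE {0..<n} (\<lambda>k. nonneg_walks N (a k) (b (transpose i j k)))"
proof (rule PiE_I)
  have walks: "W k \<in> nonneg_walks N (a k) (b k)" if "k < n" for k using W that by auto
  note splices = nonneg_walks_splice[OF walks[of i] walks[of j] \<open>t < N\<close>]
    nonneg_walks_splice[OF walks[of j] walks[of i] \<open>t < N\<close>]
  fix k assume "k \<in> {0..<n}"
  then show "swap_tails t i j W k \<in> nonneg_walks N (a k) (b (transpose i j k))"
    using assms splices walks[of k] by (auto simp: swap_tails_def transpose_def)
next
  fix k assume "k \<notin> {0..<n}"
  then show "swap_tails t i j W k = undefined"
    using assms by (auto simp: swap_tails_def PiE_def extensional_def)
qed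

lemma sum_eq_0_if_sign_reversing_involution:
  fixes f :: "'a \<Rightarrow> 'b::linordered_ab_group_add"
  assumes "finite S" and "\<And>x. x \<in> S \<Longrightarrow> g x \<in> S" and "\<And>x. x \<in> S \<Longrightarrow> g (g x) = x"
    and "\<And>x. x \<in> S \<Longrightarrow> f (g x) = - f x"
  shows "sum f S = 0"
proof -
  have "sum (f \<circ> g) S = sum f S"
    by (rule sum.reindex_bij_witness[where i = g and j = g]) (use assms in auto)
  then show ?thesis using assms(4) by (simp add: sum_negf)
qed

definition walk_systems :: "nat \<Rightarrow> nat \<Rightarrow> (nat \<Rightarrow> int) \<Rightarrow> ((nat \<Rightarrow> nat) \<times> (nat \<Rightarrow> int list)) set" where
  "walk_systems n N a =
     (SIGMA p:{p. p permutes {0..<n}}. PiE {0..<n} (\<lambda>i. nonneg_walks N (a i) (a (p i))))"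

definition noncolliding_walk_systems :: "nat \<Rightarrow> nat \<Rightarrow> (nat \<Rightarrow> int) \<Rightarrow> (nat \<Rightarrow> int list) set" where
  "noncolliding_walk_systems n N a =
     {W \<in> PiE {0..<n} (\<lambda>i. nonneg_walks N (a i) (a i)). collisions n N W = {}}"

lemma noncolliding_walk_systemsD:
  assumes "W \<in> noncolliding_walk_systems n N a"
  shows "\<And>i. i < n \<Longrightarrow> W i \<in> nonneg_walks N (a i) (a i)"
    and "\<And>i. n \<le> i \<Longrightarrow> W i = undefined"
    and "collisions n N W = {}"
  using assms by (auto simp: noncolliding_walk_systems_def PiE_def extensional_def)

definition lgv_involution ::
  "nat \<Rightarrow> nat \<Rightarrow> (nat \<Rightarrow> nat) \<times> (nat \<Rightarrow> int list) \<Rightarrow> (nat \<Rightarrow> nat) \<times> (nat \<Rightarrow> int list)" where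
  "lgv_involution n N =
     (\<lambda>(p, W). case first_collision n N W of (t, i, j) \<Rightarrow> (p \<circ> transpose i j, swap_tails t i j W))"

lemma finite_walk_systems: "finite (walk_systems n N a)"
  unfolding walk_systems_def
  by (intro finite_SigmaI finite_PiE) (auto simp: finite_permutations finite_nonneg_walks)

lemma det_eq_sum_walk_systems:
  "det (mat n n (\<lambda>(i, j). int (nonneg_walk_count N (a i) (a j)))) =
    (\<Sum>x\<in>walk_systems n N a. sign (fst x))"
proof -
  let ?A = "mat n n (\<lambda>(i, j). int (nonneg_walk_count N (a i) (a j)))"
  have "?A $$ (i, p i) = int (nonneg_walk_count N (a i) (a (p i)))"
    if "p permutes {0..<n}" "i \<in> {0..<n}" for p i
    using that by (simp add: permutes_in_image)
  then have "det ?A = (\<Sum>p | p permutes {0..<n}. sign p * (\<Prod>i = 0..<n. int (nonneg_walk_count N (a i) (a (p i)))))"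
    unfolding det_def by (auto intro!: sum.cong prod.cong)
  also have "\<dots> = (\<Sum>p | p permutes {0..<n}. \<Sum>W\<in>PiE {0..<n} (\<lambda>i. nonneg_walks N (a i) (a (p i))). sign p)"
    by (simp add: card_PiE card_nonneg_walks mult.commute)
  also have "\<dots> = (\<Sum>x\<in>walk_systems n N a. sign (fst x))"
    unfolding walk_systems_def
    by (subst sum.Sigma) (auto simp: finite_permutations finite_nonneg_walks finite_PiE case_prod_unfold)
  finally show ?thesis .
qed

context
  fixes n N :: nat and a :: "nat \<Rightarrow> int"
  assumes a_decreasing: "\<And>i j. i < j \<Longrightarrow> j < n \<Longrightarrow> a j < a i"
    and a_even: "\<And>i. i < n \<Longrightarrow> even (a i)"
begin

lemma a_injective: "i < n \<Longrightarrow> j < n \<Longrightarrow> a i = a j \<Longrightarrow> i = j"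
  using a_decreasing by (metis less_irrefl nat_neq_iff)

lemma lgv_involution_props:
  assumes x: "x \<in> walk_systems n N a" and col: "collisions n N (snd x) \<noteq> {}"
  shows "lgv_involution n N x \<in> walk_systems n N a"
    and "collisions n N (snd (lgv_involution n N x)) \<noteq> {}"
    and "lgv_involution n N (lgv_involution n N x) = x"
    and "sign (fst (lgv_involution n N x)) = - sign (fst x)"
proof -
  obtain p W where x_eq: "x = (p, W)" by (cases x)
  obtain t i j where first: "first_collision n N W = (t, i, j)" by (cases "first_collision n N W")
  from col have "(t, i, j) \<in> collisions n N W"
    using first_collision_in_collisions[of n N W] first x_eq by simp
  then have tij: "t \<le> N" "i < j" "j < n" "W i ! t = W j ! t" by (simp_all add: collisions_def)
  have p: "p permutes {0..<n}" and walks: "\<And>k. k < n \<Longrightarrow> W k \<in> nonneg_walks N (a k) (a (p k))"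
    using x x_eq by (auto simp: walk_systems_def)
  have len: "length (W k) = Suc N" if "k < n" for k using walks[OF that] by (simp add: nonneg_walks_def)
  have pij: "p i < n" "p j < n" "p i \<noteq> p j"
    using tij p by (auto simp: permutes_in_image permutes_inj inj_eq dest: permutes_inj)
  have "t < N"
  proof (rule ccontr)
    assume "\<not> t < N"
    with tij walks[of i] walks[of j] have "a (p i) = a (p j)" by (simp add: nonneg_walks_def)
    with pij a_injective show False by blast
  qed
  define \<tau> where "\<tau> = transpose i j"
  define W' where "W' = swap_tails t i j W"
  have g: "lgv_involution n N x = (p \<circ> \<tau>, W')"
    by (simp add: lgv_involution_def x_eq first \<tau>_def W'_def)
  have agree: "W' k ! s = W k ! s" if "s \<le> t" for k s
    unfolding W'_def using that tij len by (intro swap_tails_nth_le) auto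
  have "collisions n N W \<noteq> {}" using col x_eq by simp
  from first_collision_cong[OF this first agree] have first': "first_collision n N W' = (t, i, j)" .
  have \<tau>: "\<tau> permutes {0..<n}" using tij by (simp add: \<tau>_def permutes_swap_id)
  have "W \<in> PiE {0..<n} (\<lambda>k. nonneg_walks N (a k) (a (p k)))" using x x_eq by (simp add: walk_systems_def)
  from swap_tails_in_PiE_nonneg_walks[OF this _ _ \<open>t < N\<close>] tij
  have "W' \<in> PiE {0..<n} (\<lambda>k. nonneg_walks N (a k) (a ((p \<circ> \<tau>) k)))"
    by (simp add: W'_def \<tau>_def)
  then show "lgv_involution n N x \<in> walk_systems n N a"
    using g p \<tau> by (simp add: walk_systems_def permutes_compose)
  have "(t, i, j) \<in> collisions n N W'" using agree tij by (simp add: collisions_def)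
  then show "collisions n N (snd (lgv_involution n N x)) \<noteq> {}" using g by auto
  show "lgv_involution n N (lgv_involution n N x) = x"
    using g first' x_eq len tij
    by (simp add: lgv_involution_def \<tau>_def W'_def swap_tails_swap_tails comp_assoc)
  have "permutation p" "permutation \<tau>" using p \<tau> by (auto simp: permutation_permutes)
  then show "sign (fst (lgv_involution n N x)) = - sign (fst x)"
    using g x_eq tij by (simp add: sign_compose \<tau>_def sign_swap_id)
qed

lemma noncolliding_walk_system_id:
  assumes x: "(p, W) \<in> walk_systems n N a" and nc: "collisions n N W = {}"
  shows "p = id"
proof -
  have p: "p permutes {0..<n}" and walks: "\<And>k. k < n \<Longrightarrow> W k \<in> nonneg_walks N (a k) (a (p k))"
    using x by (auto simp: walk_systems_def)
  have p_less: "p i < p j" if ij: "i < j" "j < n" for i j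
  proof -
    have "\<forall>s\<le>N. W i ! s \<noteq> W j ! s" using nc ij by (auto simp: collisions_def)
    then have "W j ! N + 2 \<le> W i ! N"
      by (intro noncolliding_walks_gap[OF walks[of i] walks[of j]]) (use ij a_even a_decreasing in auto)
    then have "a (p j) < a (p i)" using walks[of i] walks[of j] ij by (simp add: nonneg_walks_def)
    moreover have "p i < n" "p j < n" using ij p by (simp_all add: permutes_in_image)
    ultimately show "p i < p j" using a_decreasing by (metis not_less_iff_gr_or_eq)
  qed
  have "i \<le> p i" if "i < n" for i
    using that by (induction i) (use p_less in \<open>auto simp: Suc_le_eq intro: le_less_trans\<close>)
  then show "p = id" using p by (intro permutes_natset_ge) auto
qed

theorem lindstroem_gessel_viennot:
  "det (mat n n (\<lambda>(i, j). int (nonneg_walk_count N (a i) (a j)))) =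
    int (card (noncolliding_walk_systems n N a))"
proof -
  define C :: "((nat \<Rightarrow> nat) \<times> (nat \<Rightarrow> int list)) set"
    where "C = {x. collisions n N (snd x) \<noteq> {}}"
  have "(\<Sum>x\<in>walk_systems n N a \<inter> C. sign (fst x)) = (0 :: int)"
    by (rule sum_eq_0_if_sign_reversing_involution[where g = "lgv_involution n N"])
      (use lgv_involution_props in \<open>auto simp: C_def finite_walk_systems\<close>)
  moreover have "walk_systems n N a - C = Pair id ` noncolliding_walk_systems n N a"
    using noncolliding_walk_system_id
    by (fastforce simp: C_def walk_systems_def noncolliding_walk_systems_def permutes_id)
  ultimately show ?thesis
    unfolding det_eq_sum_walk_systems sum.Int_Diff[OF finite_walk_systems, where B = C]
    by (simp add: sum.reindex inj_on_def)
qed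

end

section \<open>Lattice words as non-colliding walk systems\<close>

lemma prefix_wt2_0 [simp]: "prefix_wt2 bs 0 k = 0"
  by (simp add: prefix_wt2_def tens_wt2_def)

lemma prefix_wt2_Suc:
  "t < length bs \<Longrightarrow> prefix_wt2 bs (Suc t) k = prefix_wt2 bs t k + spin_wt2 (bs ! t) k"
  by (simp add: prefix_wt2_def tens_wt2_def take_Suc_conv_app_nth)

lemma dominant_B_antimono:
  assumes "dominant_B n x" "i \<le> j" "j < n"
  shows "x j \<le> x i"
  using assms(2,3)
proof (induction j)
  case (Suc j)
  with assms(1) show ?case
    by (cases "i = Suc j") (auto simp: dominant_B_def intro: order_trans[of _ "x j"])
qed simp

text \<open>The \<open>i\<close>-th walk follows the \<open>i\<close>-th coordinate of twice the prefix weights, raised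
  to \<open>level n i\<close>: dominance of all prefix weights turns into non-collision and non-negativity of
  the walks.\<close>

definition walks_of_word :: "nat \<Rightarrow> nat \<Rightarrow> bool list list \<Rightarrow> nat \<Rightarrow> int list" where
  "walks_of_word n N bs = (\<lambda>i\<in>{0..<n}. map (\<lambda>t. level n i + prefix_wt2 bs t i) [0..<Suc N])"

definition word_of_walks :: "nat \<Rightarrow> nat \<Rightarrow> (nat \<Rightarrow> int list) \<Rightarrow> bool list list" where
  "word_of_walks n N W = map (\<lambda>t. map (\<lambda>i. W i ! t < W i ! Suc t) [0..<n]) [0..<N]"

lemma nth_walks_of_word:
  "i < n \<Longrightarrow> t \<le> N \<Longrightarrow> walks_of_word n N bs i ! t = level n i + prefix_wt2 bs t i"
  by (simp add: walks_of_word_def del: upt_Suc)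

lemma length_walks_of_word: "i < n \<Longrightarrow> length (walks_of_word n N bs i) = Suc N"
  by (simp add: walks_of_word_def del: upt_Suc)

lemma walks_of_word_in_noncolliding:
  assumes bs: "bs \<in> zero_weight_lattice_words n N"
  shows "walks_of_word n N bs \<in> noncolliding_walk_systems n N (level n)"
proof -
  let ?W = "walks_of_word n N bs"
  have len: "length bs = N" and wt: "\<And>k. k < n \<Longrightarrow> prefix_wt2 bs N k = 0"
    and dom: "\<And>t. t \<le> N \<Longrightarrow> dominant_B n (prefix_wt2 bs t)"
    using bs by (auto simp: zero_weight_lattice_words_def tensor_power_def prefix_wt2_def)
  have "?W i \<in> nonneg_walks N (level n i) (level n i)" if i: "i < n" for i
  proof -
    have "i \<le> n - 1" using i by simp
    then have "0 \<le> prefix_wt2 bs t i" if "t \<le> N" for t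
      using dominant_B_antimono[OF dom[OF that]] dom[OF that] i by (force simp: dominant_B_def)
    moreover have "\<bar>prefix_wt2 bs (Suc t) i - prefix_wt2 bs t i\<bar> = 1" if "t < N" for t
      using that len by (simp add: prefix_wt2_Suc spin_wt2_def)
    moreover have "0 \<le> level n i" by (simp add: level_def)
    ultimately show ?thesis
      using i wt[OF i] by (simp add: nonneg_walks_def nth_walks_of_word length_walks_of_word)
  qed
  moreover have "collisions n N ?W = {}"
  proof -
    have "?W j ! t < ?W i ! t" if "t \<le> N" "i < j" "j < n" for t i j
      using that dominant_B_antimono[OF dom[OF that(1)], of i j]
      by (simp add: nth_walks_of_word level_def)
    then show ?thesis by (force simp: collisions_def)
  qed
  ultimately show ?thesis
    by (simp add: noncolliding_walk_systems_def walks_of_word_def PiE_iff)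
qed

lemma prefix_wt2_word_of_walks:
  assumes W: "W \<in> noncolliding_walk_systems n N (level n)" and "i < n" "t \<le> N"
  shows "prefix_wt2 (word_of_walks n N W) t i = W i ! t - level n i"
  using \<open>t \<le> N\<close>
proof (induction t)
  case 0
  then show ?case
    using noncolliding_walk_systemsD(1)[OF W \<open>i < n\<close>] by (simp add: nonneg_walks_def)
next
  case (Suc t)
  have "\<bar>W i ! Suc t - W i ! t\<bar> = 1"
    using noncolliding_walk_systemsD(1)[OF W \<open>i < n\<close>] Suc.prems by (simp add: nonneg_walks_def)
  with Suc show ?case
    using \<open>i < n\<close> by (auto simp: prefix_wt2_Suc word_of_walks_def spin_wt2_def)
qed

lemma word_of_walks_in_lattice_words:
  assumes n: "1 \<le> n" and W: "W \<in> noncolliding_walk_systems n N (level n)"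
  shows "word_of_walks n N W \<in> zero_weight_lattice_words n N"
proof -
  let ?bs = "word_of_walks n N W"
  note walks = noncolliding_walk_systemsD(1)[OF W]
  have apart: "\<forall>s\<le>N. W i ! s \<noteq> W j ! s" if "i < j" "j < n" for i j
    using noncolliding_walk_systemsD(3)[OF W] that by (auto simp: collisions_def)
  note X = prefix_wt2_word_of_walks[OF W]
  have "dominant_B n (prefix_wt2 ?bs t)" if t: "t \<le> N" for t
  proof -
    have "W i ! t + 2 \<le> W (i - 1) ! t" if "1 \<le> i" "i < n" for i
      using that t apart[of "i - 1" i]
      by (intro noncolliding_walks_gap[OF walks[of "i - 1"] walks[of i]]) (auto simp: level_def)
    then have "prefix_wt2 ?bs t i \<le> prefix_wt2 ?bs t (i - 1)" if "1 \<le> i" "i < n" for i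
      using that t X[of i t] X[of "i - 1" t] by (simp add: level_def)
    moreover have "0 \<le> W (n - 1) ! t" using walks[of "n - 1"] n t by (simp add: nonneg_walks_def)
    ultimately show ?thesis using n t X[of "n - 1" t] by (simp add: dominant_B_def level_def)
  qed
  moreover have "tens_wt2 ?bs k = 0" if "k < n" for k
    using X[OF that order_refl] walks[OF that]
    by (simp add: prefix_wt2_def word_of_walks_def nonneg_walks_def)
  ultimately show ?thesis
    by (simp add: zero_weight_lattice_words_def tensor_power_def spin_elems_def word_of_walks_def)
qed

lemma word_of_walks_of_word:
  assumes "bs \<in> zero_weight_lattice_words n N"
  shows "word_of_walks n N (walks_of_word n N bs) = bs"
proof -
  have len: "length bs = N" and letters: "\<And>t. t < N \<Longrightarrow> length (bs ! t) = n"
    using assms by (auto simp: zero_weight_lattice_words_def tensor_power_def spin_elems_def)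
  show ?thesis
    by (rule nth_equalityI)
      (auto simp: word_of_walks_def len letters nth_walks_of_word prefix_wt2_Suc spin_wt2_def
        intro!: nth_equalityI split: if_splits)
qed

lemma walks_of_word_of_walks:
  assumes W: "W \<in> noncolliding_walk_systems n N (level n)"
  shows "walks_of_word n N (word_of_walks n N W) = W"
proof
  fix i
  show "walks_of_word n N (word_of_walks n N W) i = W i"
  proof (cases "i < n")
    case True
    then have "length (W i) = Suc N"
      using noncolliding_walk_systemsD(1)[OF W] by (simp add: nonneg_walks_def)
    then show ?thesis
      using True by (intro nth_equalityI)
        (auto simp: walks_of_word_def prefix_wt2_word_of_walks[OF W] simp del: upt_Suc)
  next
    case False
    then show ?thesis using noncolliding_walk_systemsD(2)[OF W] by (simp add: walks_of_word_def)
  qed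
qed

lemma card_zero_weight_lattice_words:
  assumes "1 \<le> n"
  shows "card (zero_weight_lattice_words n N) = card (noncolliding_walk_systems n N (level n))"
  by (rule bij_betw_same_card[of "walks_of_word n N"], rule bij_betw_byWitness[of _ "word_of_walks n N"])
    (use assms in \<open>auto simp: word_of_walks_of_word walks_of_word_of_walks
      walks_of_word_in_noncolliding word_of_walks_in_lattice_words\<close>)

theorem theorem4p1:
  fixes n m :: nat
  assumes "n \<ge> 1" and "m \<ge> 1"
  shows "int (card (trivial_components n (2 * m))) = det (hankel_cat n m)"
proof -
  have "int (card (trivial_components n (2 * m))) =
      int (card (noncolliding_walk_systems n (2 * m) (level n)))"
    using assms(1) by (simp add: trivial_components_eq_zero_weight_lattice_words card_zero_weight_lattice_words)
  also have "\<dots> = det (walk_count_mat n (2 * m))"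
    unfolding walk_count_mat_def by (rule lindstroem_gessel_viennot[symmetric]) (auto simp: level_def)
  also have "\<dots> = det (hankel_cat n m)"
    using assms(1) by (rule det_hankel_cat[symmetric])
  finally show ?thesis .
qed

end
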